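(* Let $E$ be finite, $\Omega=E^{\mathbb{Z}}$ with left shift $S$, fix $\mathtt a\in E$ and let $\mathbf a$ be the all-$\mathtt a$ configuration. Let $\phi\in C(\Omega)$ have the extensibility property, let $\gamma^\phi$ be the associated Gibbsian specification $\gamma^\phi_\Lambda(\omega_\Lambda|\omega_{\Lambda^c})=\big(\sum_{\xi_\Lambda\in E^\Lambda}e^{\rho^\phi(\xi_\Lambda\omega_{\mathbb{Z}\setminus\Lambda},\omega)}\big)^{-1}$, and let $\phi_{\gamma^\phi}(\omega)=\log\frac{\gamma^\phi_{\{0\}}(\omega_0|\mathbf a_{-\infty}^{-1}\omega_1^\infty)}{\gamma^\phi_{\{0\}}(\mathtt a|\mathbf a_{-\infty}^{-1}\omega_1^\infty)}$. Then $\phi_{\gamma^\phi}$ is weakly cohomologous to $\phi$: there exists $C\in\mathbb{R}$ such that for every shift-invariant Borel probability measure $\tau$ on $\Omega$, $$\int_\Omega\phi_{\gamma^\phi}\,d\tau=\int_\Omega\phi\,d\tau+C.$$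
   Context: $E$ finite, discrete; $\Omega=E^{\mathbb{Z}}$ with product topology; $(S\omega)_i=\omega_{i+1}$. For $\omega\in\Omega$, $a\in E$, $\omega^a$ equals $a$ at $0$ and $\omega_k$ at $k\neq0$. A continuous $\phi$ has the extensibility property if for all $a,\tilde a\in E$, $\sum_{i=-n}^{n}[\phi(S^i\omega^a)-\phi(S^i\omega^{\tilde a})]$ converges uniformly in $\omega$; then $\rho^\phi(\xi,\eta)=\lim_{n}\sum_{i=-n}^n[\phi(S^i\xi)-\phi(S^i\eta)]$ exists for all $\xi,\eta$ differing at finitely many sites, and $\gamma^\phi$ above is a translation-invariant Gibbsian specification. $\xi_\Lambda\omega_{\mathbb{Z}\setminus\Lambda}$ equals $\xi$ on $\Lambda$ and $\omega$ elsewhere; $\mathbf a_{-\infty}^{-1}\omega_1^\infty$ is the boundary condition equal to $\mathtt a$ on negative sites and $\omega_k$ on sites $k\ge1$ (so $\phi_{\gamma^\phi}$ depends only on $\omega_0,\omega_1,\dots$). *)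

theory Defs
  imports "HOL-Analysis.Analysis" "HOL-Probability.Probability"
begin

text \<open>Configurations are functions int \<Rightarrow> 'e, with the product topology
(from Function_Topology); 'e is finite with the discrete topology.\<close>

definition shiftp :: "int \<Rightarrow> (int \<Rightarrow> 'e) \<Rightarrow> (int \<Rightarrow> 'e)" where
  "shiftp i w = (\<lambda>k. w (k + i))"

definition shift :: "(int \<Rightarrow> 'e) \<Rightarrow> (int \<Rightarrow> 'e)" where
  "shift w = (\<lambda>k. w (k + 1))"

definition psum :: "((int \<Rightarrow> 'e) \<Rightarrow> real) \<Rightarrow> (int \<Rightarrow> 'e) \<Rightarrow> (int \<Rightarrow> 'e) \<Rightarrow> nat \<Rightarrow> real" where
  "psum \<phi> \<xi> \<eta> n = (\<Sum>i\<in>{- int n..int n}. \<phi> (shiftp i \<xi>) - \<phi> (shiftp i \<eta>))"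

definition extensible :: "((int \<Rightarrow> 'e::topological_space) \<Rightarrow> real) \<Rightarrow> bool" where
  "extensible \<phi> \<longleftrightarrow> continuous_on UNIV \<phi> \<and>
     (\<forall>a a'. \<exists>g. uniform_limit UNIV (\<lambda>n w. psum \<phi> (w(0 := a)) (w(0 := a')) n) g sequentially)"

definition rho :: "((int \<Rightarrow> 'e) \<Rightarrow> real) \<Rightarrow> (int \<Rightarrow> 'e) \<Rightarrow> (int \<Rightarrow> 'e) \<Rightarrow> real" where
  "rho \<phi> \<xi> \<eta> = lim (psum \<phi> \<xi> \<eta>)"

definition gibbs_spec :: "((int \<Rightarrow> 'e::finite) \<Rightarrow> real) \<Rightarrow> int set \<Rightarrow> (int \<Rightarrow> 'e) \<Rightarrow> real" where
  "gibbs_spec \<phi> \<Lambda> w =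
     inverse (\<Sum>\<xi>\<in>PiE \<Lambda> (\<lambda>_. UNIV). exp (rho \<phi> (\<lambda>k. if k \<in> \<Lambda> then \<xi> k else w k) w))"

definition bdry :: "'e \<Rightarrow> (int \<Rightarrow> 'e) \<Rightarrow> (int \<Rightarrow> 'e)" where
  "bdry a w = (\<lambda>k. if k < 0 then a else w k)"

definition phi_gamma :: "((int \<Rightarrow> 'e::finite) \<Rightarrow> real) \<Rightarrow> 'e \<Rightarrow> (int \<Rightarrow> 'e) \<Rightarrow> real" where
  "phi_gamma \<phi> a w =
     ln (gibbs_spec \<phi> {0} (bdry a w) / gibbs_spec \<phi> {0} ((bdry a w)(0 := a)))"

end

theory Submission
  imports Defs
begin

text \<open>
  Write \<open>x\<^sub>w = bdry a w\<close> and \<open>F i w = \<phi> (S\<^sup>i x\<^sub>w)\<close>.  By the cocycle law of \<open>\<rho>\<close>, the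
  ratio of the two one-site specifications defining \<open>phi_gamma\<close> is \<open>exp \<rho>(x\<^sub>w, x\<^sub>w(0 := a))\<close>,
  so \<open>phi_gamma\<close> is the limit of the symmetric partial sums of
  \<open>\<phi> (S\<^sup>i x\<^sub>w) - \<phi> (S\<^sup>i (x\<^sub>w(0 := a)))\<close>, uniformly in \<open>w\<close> by extensibility.  Since
  \<open>x\<^sub>w(0 := a) = S\<^sup>-\<^sup>1 x\<^bsub>S w\<^esub>\<close>, the \<open>n\<close>-th partial sum is the sum of
  \<open>F i w - F (i - 1) (S w)\<close> over \<open>-n \<le> i \<le> n\<close>, and its integral against a shift-invariant
  \<open>\<tau>\<close> telescopes to \<open>\<integral>F n - \<integral>F (-n-1)\<close>.  As \<open>\<phi>\<close> is uniformly continuous on the compact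
  configuration space, \<open>F n\<close> is uniformly close to \<open>\<phi> \<circ> S\<^sup>n\<close>, whose integral is \<open>\<integral>\<phi>\<close>, and
  \<open>F (-n-1)\<close> to the constant \<open>\<phi> (\<lambda>_. a)\<close>; hence \<open>C = - \<phi> (\<lambda>_. a)\<close>.
\<close>

lemma continuous_on_shiftp: "continuous_on UNIV (shiftp i :: (int \<Rightarrow> 'e::topological_space) \<Rightarrow> _)"
  unfolding shiftp_def by (intro continuous_on_coordinatewise_then_product) simp

lemma continuous_on_shift: "continuous_on UNIV (shift :: (int \<Rightarrow> 'e::topological_space) \<Rightarrow> _)"
  unfolding shift_def by (intro continuous_on_coordinatewise_then_product) simp

lemma continuous_on_bdry: "continuous_on UNIV (bdry a :: (int \<Rightarrow> 'e::topological_space) \<Rightarrow> _)"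
  unfolding bdry_def
proof (intro continuous_on_coordinatewise_then_product)
  show "continuous_on UNIV (\<lambda>w::int \<Rightarrow> 'e. if i < 0 then a else w i)" for i
    by (cases "i < 0") auto
qed

lemma continuous_on_fun_upd: "continuous_on UNIV (\<lambda>w::'i \<Rightarrow> 'e::topological_space. w(j := b))"
proof (intro continuous_on_coordinatewise_then_product)
  show "continuous_on UNIV (\<lambda>w::'i \<Rightarrow> 'e. (w(j := b)) i)" for i
    by (cases "i = j") auto
qed

lemma continuous_on_comp_shiftp:
  assumes "continuous_on UNIV \<phi>" "continuous_on UNIV X"
  shows "continuous_on UNIV (\<lambda>w. \<phi> (shiftp i (X w)))"
  using continuous_on_compose2[OF assms(1) continuous_on_compose2[OF continuous_on_shiftp assms(2)]]
  by simp

lemma continuous_on_psum: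
  fixes \<phi> :: "(int \<Rightarrow> 'e::topological_space) \<Rightarrow> real"
  assumes "continuous_on UNIV \<phi>" "continuous_on UNIV X" "continuous_on UNIV Y"
  shows "continuous_on UNIV (\<lambda>w. psum \<phi> (X w) (Y w) n)"
  unfolding psum_def by (intro continuous_on_sum continuous_on_diff continuous_on_comp_shiftp assms)

lemma compact_UNIV_fun: "compact (UNIV :: ('i \<Rightarrow> 'e::{finite,topological_space}) set)"
proof -
  have "compact_space (product_topology (\<lambda>i::'i. (euclidean :: 'e topology)) UNIV)"
    unfolding compact_space_product_topology
    by (simp add: compact_space_def compactin_euclidean_iff finite_imp_compact)
  then show ?thesis
    by (simp add: euclidean_product_topology compact_space_def compactin_euclidean_iff)
qed

definition cylinder :: "(int \<Rightarrow> 'e) \<Rightarrow> nat \<Rightarrow> (int \<Rightarrow> 'e) set" where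
  "cylinder x N = {y. \<forall>k. \<bar>k\<bar> \<le> int N \<longrightarrow> y k = x k}"

lemma open_cylinder: "open (cylinder (x :: int \<Rightarrow> 'e::discrete_topology) N)"
proof -
  have "cylinder x N = (\<Inter>k\<in>{- int N..int N}. (\<lambda>y. y k) -` {x k})"
    by (auto simp: cylinder_def abs_le_iff)
  then show ?thesis
    by (auto intro!: open_INT open_vimage simp: Topological_Spaces.open_discrete)
qed

lemma cylinder_subset_open:
  assumes "open (U :: (int \<Rightarrow> 'e::topological_space) set)" "x \<in> U"
  shows "\<exists>N. cylinder x N \<subseteq> U"
proof -
  obtain X where X: "x \<in> PiE UNIV X" "finite {i. X i \<noteq> UNIV}" "PiE UNIV X \<subseteq> U"
    using product_topology_open_contains_basis[of "\<lambda>i. euclidean" UNIV U x] assms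
    by (auto simp: open_fun_def)
  define N where "N = nat (Max (insert 0 (abs ` {i. X i \<noteq> UNIV})))"
  have "y i \<in> X i" if "y \<in> cylinder x N" for y i
  proof (cases "X i = UNIV")
    case False
    then have "\<bar>i\<bar> \<le> int N"
      unfolding N_def using X(2) by (simp add: Max_ge_iff)
    then show ?thesis
      using that X(1) by (auto simp: cylinder_def)
  qed simp
  then show ?thesis
    using X(3) by blast
qed

lemma continuous_on_uniformly_on_cylinders:
  fixes \<phi> :: "(int \<Rightarrow> 'e::{finite,discrete_topology}) \<Rightarrow> 'b::metric_space"
  assumes "continuous_on UNIV \<phi>" "e > 0"
  obtains N where "\<And>x y. y \<in> cylinder x N \<Longrightarrow> dist (\<phi> y) (\<phi> x) < e"
proof -
  have "\<exists>N. cylinder x N \<subseteq> \<phi> -` ball (\<phi> x) (e/2)" for x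
    using assms by (intro cylinder_subset_open open_vimage) auto
  then obtain Nx where Nx: "\<And>x. cylinder x (Nx x) \<subseteq> \<phi> -` ball (\<phi> x) (e/2)"
    by metis
  obtain D where D: "finite D" "UNIV \<subseteq> (\<Union>x\<in>D. cylinder x (Nx x))"
  proof (rule compactE_image[OF compact_UNIV_fun, of UNIV "\<lambda>x. cylinder x (Nx x)"])
    show "UNIV \<subseteq> (\<Union>x. cylinder x (Nx x))"
      by (auto simp: cylinder_def)
  qed (auto simp: open_cylinder)
  define N where "N = Max (insert 0 (Nx ` D))"
  have "dist (\<phi> y) (\<phi> z) < e" if "y \<in> cylinder z N" for y z
  proof -
    obtain x where x: "x \<in> D" "z \<in> cylinder x (Nx x)"
      using D(2) by blast
    have "Nx x \<le> N"
      unfolding N_def using D(1) x(1) by simp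
    then have "y \<in> cylinder x (Nx x)"
      using x(2) that by (auto simp: cylinder_def)
    with x(2) Nx[of x] have "dist (\<phi> y) (\<phi> x) < e/2" "dist (\<phi> z) (\<phi> x) < e/2"
      by (auto simp: dist_commute)
    then show ?thesis
      by (rule dist_triangle_half_l)
  qed
  then show ?thesis
    using that by blast
qed

lemma uniform_limit_cylinder_diff:
  fixes \<phi> :: "(int \<Rightarrow> 'e::{finite,discrete_topology}) \<Rightarrow> real"
  assumes "continuous_on UNIV \<phi>"
    and "\<And>N. \<forall>\<^sub>F n in sequentially. \<forall>w. Y n w \<in> cylinder (X n w) N"
  shows "uniform_limit UNIV (\<lambda>n w. \<phi> (Y n w) - \<phi> (X n w)) (\<lambda>_. 0) sequentially"
proof (rule uniform_limitI)
  fix e :: real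
  assume "e > 0"
  then obtain N where N: "\<And>x y. y \<in> cylinder x N \<Longrightarrow> dist (\<phi> y) (\<phi> x) < e"
    using continuous_on_uniformly_on_cylinders[OF assms(1)] by blast
  show "\<forall>\<^sub>F n in sequentially. \<forall>w\<in>UNIV. dist (\<phi> (Y n w) - \<phi> (X n w)) 0 < e"
    using assms(2)[of N] by eventually_elim (use N in \<open>simp add: dist_real_def\<close>)
qed

lemma psum_add: "psum \<phi> \<xi> \<eta> n + psum \<phi> \<eta> \<zeta> n = psum \<phi> \<xi> \<zeta> n"
  unfolding psum_def by (simp add: sum.distrib[symmetric])

lemma extensible_uniform_limit_rho:
  assumes "extensible \<phi>"
  shows "uniform_limit UNIV (\<lambda>n v. psum \<phi> (v(0 := b)) (v(0 := c)) n)
           (\<lambda>v. rho \<phi> (v(0 := b)) (v(0 := c))) sequentially"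
proof -
  obtain g where g: "uniform_limit UNIV (\<lambda>n v. psum \<phi> (v(0 := b)) (v(0 := c)) n) g sequentially"
    using assms unfolding extensible_def by blast
  have "g v = rho \<phi> (v(0 := b)) (v(0 := c))" for v
    unfolding rho_def using limI[OF tendsto_uniform_limitI[OF g UNIV_I]] by simp
  then have "g = (\<lambda>v. rho \<phi> (v(0 := b)) (v(0 := c)))"
    by blast
  with g show ?thesis
    by simp
qed

lemma psum_tendsto_rho:
  assumes "extensible \<phi>"
  shows "psum \<phi> (v(0 := b)) (v(0 := c)) \<longlonglongrightarrow> rho \<phi> (v(0 := b)) (v(0 := c))"
  using tendsto_uniform_limitI[OF extensible_uniform_limit_rho[OF assms]] by simp

lemma rho_site0_cocycle:
  assumes "extensible \<phi>"
  shows "rho \<phi> (v(0 := b)) (v(0 := d)) = rho \<phi> (v(0 := b)) (v(0 := c)) + rho \<phi> (v(0 := c)) (v(0 := d))"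
  using tendsto_add[OF psum_tendsto_rho[OF assms, of v b c] psum_tendsto_rho[OF assms, of v c d]]
    psum_tendsto_rho[OF assms, of v b d]
  by (simp add: psum_add LIMSEQ_unique)

lemma rho_site0_antisym:
  assumes "extensible \<phi>"
  shows "rho \<phi> (v(0 := c)) (v(0 := b)) = - rho \<phi> (v(0 := b)) (v(0 := c))"
  using rho_site0_cocycle[OF assms, where v = v and b = b and c = b and d = b]
    rho_site0_cocycle[OF assms, where v = v and b = b and c = c and d = b]
  by linarith

lemma gibbs_spec_site0_ratio:
  fixes \<phi> :: "(int \<Rightarrow> 'e::{finite,topological_space}) \<Rightarrow> real"
  assumes "extensible \<phi>"
  shows "gibbs_spec \<phi> {0} x / gibbs_spec \<phi> {0} (x(0 := b)) = exp (rho \<phi> x (x(0 := b)))"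
proof -
  define Z where "Z y = (\<Sum>\<xi>\<in>PiE {0::int} (\<lambda>_. UNIV). exp (rho \<phi> (y(0 := \<xi> 0)) y))" for y
  have gibbs_eq: "gibbs_spec \<phi> {0} y = inverse (Z y)" for y
  proof -
    have "(\<lambda>k. if k = 0 then \<xi> k else y k) = y(0 := \<xi> 0)" for \<xi> :: "int \<Rightarrow> 'e"
      by auto
    then show ?thesis
      by (simp add: gibbs_spec_def Z_def)
  qed
  have Z_pos: "Z y > 0" for y
    unfolding Z_def by (intro sum_pos) (auto simp: finite_PiE PiE_eq_empty_iff)
  have Z_factor: "Z x = exp (rho \<phi> (x(0 := b)) x) * Z (x(0 := b))"
  proof -
    have split: "exp (rho \<phi> (x(0 := c)) x)
        = exp (rho \<phi> (x(0 := b)) x) * exp (rho \<phi> (x(0 := c)) (x(0 := b)))" for c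
      using rho_site0_cocycle[OF assms, where v = x and b = c and c = b and d = "x 0"]
      by (simp add: exp_add mult.commute)
    show ?thesis
      unfolding Z_def sum_distrib_left fun_upd_upd by (rule sum.cong[OF refl split])
  qed
  have "rho \<phi> x (x(0 := b)) = - rho \<phi> (x(0 := b)) x"
    using rho_site0_antisym[OF assms, where v = x and b = b and c = "x 0"] by simp
  with Z_factor Z_pos[of "x(0 := b)"] show ?thesis
    unfolding gibbs_eq by (simp add: exp_minus field_simps)
qed

lemma phi_gamma_eq_rho:
  assumes "extensible \<phi>"
  shows "phi_gamma \<phi> a w = rho \<phi> (bdry a w) ((bdry a w)(0 := a))"
  unfolding phi_gamma_def gibbs_spec_site0_ratio[OF assms] by simp

lemma uniform_limit_psum_site0:
  fixes \<phi> :: "(int \<Rightarrow> 'e::{finite,topological_space}) \<Rightarrow> real"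
  assumes "extensible \<phi>"
  shows "uniform_limit UNIV (\<lambda>n v. psum \<phi> v (v(0 := c)) n) (\<lambda>v. rho \<phi> v (v(0 := c))) sequentially"
proof (rule uniform_limitI)
  fix e :: real
  assume "e > 0"
  have "\<forall>\<^sub>F n in sequentially. \<forall>v.
      dist (psum \<phi> (v(0 := b)) (v(0 := c)) n) (rho \<phi> (v(0 := b)) (v(0 := c))) < e" for b
    using uniform_limitD[OF extensible_uniform_limit_rho[OF assms] \<open>e > 0\<close>] by simp
  then have "\<forall>\<^sub>F n in sequentially. \<forall>b v.
      dist (psum \<phi> (v(0 := b)) (v(0 := c)) n) (rho \<phi> (v(0 := b)) (v(0 := c))) < e"
    by (rule eventually_all_finite)
  then show "\<forall>\<^sub>F n in sequentially. \<forall>v\<in>UNIV. dist (psum \<phi> v (v(0 := c)) n) (rho \<phi> v (v(0 := c))) < e"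
    by eventually_elim (metis fun_upd_triv)
qed

definition phi_gamma_partial :: "((int \<Rightarrow> 'e) \<Rightarrow> real) \<Rightarrow> 'e \<Rightarrow> nat \<Rightarrow> (int \<Rightarrow> 'e) \<Rightarrow> real" where
  "phi_gamma_partial \<phi> a n w = psum \<phi> (bdry a w) ((bdry a w)(0 := a)) n"

lemma continuous_on_phi_gamma_partial:
  fixes \<phi> :: "(int \<Rightarrow> 'e::topological_space) \<Rightarrow> real"
  assumes "continuous_on UNIV \<phi>"
  shows "continuous_on UNIV (phi_gamma_partial \<phi> a n)"
  unfolding phi_gamma_partial_def
  by (intro continuous_on_psum assms continuous_on_bdry
      continuous_on_compose2[OF continuous_on_fun_upd continuous_on_bdry]) auto

lemma uniform_limit_phi_gamma_partial:
  fixes \<phi> :: "(int \<Rightarrow> 'e::{finite,topological_space}) \<Rightarrow> real"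
  assumes "extensible \<phi>"
  shows "uniform_limit UNIV (\<lambda>n. phi_gamma_partial \<phi> a n) (phi_gamma \<phi> a) sequentially"
  using uniform_limit_compose'[OF uniform_limit_psum_site0[OF assms, of a], of "bdry a" UNIV]
  unfolding phi_gamma_partial_def[abs_def] phi_gamma_eq_rho[OF assms, abs_def] by simp

lemma continuous_on_phi_gamma:
  fixes \<phi> :: "(int \<Rightarrow> 'e::{finite,topological_space}) \<Rightarrow> real"
  assumes "extensible \<phi>"
  shows "continuous_on UNIV (phi_gamma \<phi> a)"
proof (rule uniform_limit_theorem[OF _ uniform_limit_phi_gamma_partial[OF assms]])
  have "continuous_on UNIV \<phi>"
    using assms by (simp add: extensible_def)
  then show "\<forall>\<^sub>F n in sequentially. continuous_on UNIV (phi_gamma_partial \<phi> a n)"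
    by (simp add: continuous_on_phi_gamma_partial)
qed simp

lemma shiftp_bdry_fun_upd: "shiftp i ((bdry a w)(0 := a)) = shiftp (i - 1) (bdry a (shift w))"
  unfolding shiftp_def shift_def bdry_def by auto

lemma phi_gamma_partial_telescoping:
  "phi_gamma_partial \<phi> a n w
    = (\<Sum>i\<in>{- int n..int n}. \<phi> (shiftp i (bdry a w)) - \<phi> (shiftp (i - 1) (bdry a (shift w))))"
  unfolding phi_gamma_partial_def psum_def shiftp_bdry_fun_upd ..

lemma sum_telescope_int:
  fixes c :: "int \<Rightarrow> 'a::ab_group_add"
  assumes "m \<le> n + 1"
  shows "(\<Sum>i\<in>{m..n}. c i - c (i - 1)) = c n - c (m - 1)"
proof -
  have "m - 1 \<le> n"
    using assms by simp
  then show ?thesis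
  proof (induction n rule: int_ge_induct)
    case (step n)
    then have "{m..n + 1} = insert (n + 1) {m..n}"
      by auto
    with step show ?case
      by simp
  qed simp
qed

lemma (in prob_space) integral_uniform_limit:
  fixes F :: "nat \<Rightarrow> 'a \<Rightarrow> real"
  assumes "\<And>n. integrable M (F n)" "integrable M G" "uniform_limit UNIV F G sequentially"
  shows "(\<lambda>n. \<integral>x. F n x \<partial>M) \<longlonglongrightarrow> (\<integral>x. G x \<partial>M)"
proof (rule tendstoI)
  fix e :: real
  assume "e > 0"
  then have "\<forall>\<^sub>F n in sequentially. \<forall>x\<in>UNIV. dist (F n x) (G x) < e / 2"
    using assms(3) by (intro uniform_limitD) auto
  then show "\<forall>\<^sub>F n in sequentially. dist (\<integral>x. F n x \<partial>M) (\<integral>x. G x \<partial>M) < e"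
  proof eventually_elim
    case (elim n)
    have "dist (\<integral>x. F n x \<partial>M) (\<integral>x. G x \<partial>M) = \<bar>\<integral>x. F n x - G x \<partial>M\<bar>"
      using assms by (simp add: dist_real_def)
    also have "\<dots> \<le> (\<integral>x. \<bar>F n x - G x\<bar> \<partial>M)"
      by (rule integral_abs_bound)
    also have "\<dots> \<le> e / 2"
      using elim assms by (intro integral_le_const) (auto simp: dist_real_def less_imp_le)
    finally show ?case
      using \<open>e > 0\<close> by simp
  qed
qed

locale shift_invariant_prob_space = prob_space \<tau>
  for \<tau> :: "(int \<Rightarrow> 'e::{finite,discrete_topology}) measure" +
  assumes sets_eq_borel: "sets \<tau> = sets borel"
    and distr_shift: "distr \<tau> \<tau> shift = \<tau>"
begin

lemma borel_measurable_continuous: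
  "continuous_on UNIV f \<Longrightarrow> f \<in> borel_measurable \<tau>"
  using borel_measurable_continuous_onI measurable_cong_sets[OF sets_eq_borel refl] by blast

lemma integrable_continuous:
  fixes f :: "(int \<Rightarrow> 'e) \<Rightarrow> real"
  assumes "continuous_on UNIV f"
  shows "integrable \<tau> f"
proof -
  have "bounded (range f)"
    by (rule compact_imp_bounded[OF compact_continuous_image[OF assms compact_UNIV_fun]])
  then obtain B where "\<And>w. norm (f w) \<le> B"
    by (auto simp: bounded_iff)
  then show ?thesis
    by (intro integrable_const_bound[where B = B] borel_measurable_continuous assms) auto
qed

lemma measurable_shiftp: "shiftp i \<in> \<tau> \<rightarrow>\<^sub>M \<tau>"
  using borel_measurable_continuous_onI[OF continuous_on_shiftp]
    measurable_cong_sets[OF sets_eq_borel sets_eq_borel] by blast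

lemma measurable_shift: "shift \<in> \<tau> \<rightarrow>\<^sub>M \<tau>"
  using borel_measurable_continuous_onI[OF continuous_on_shift]
    measurable_cong_sets[OF sets_eq_borel sets_eq_borel] by blast

lemma integral_shift:
  fixes f :: "(int \<Rightarrow> 'e) \<Rightarrow> real"
  assumes "f \<in> borel_measurable \<tau>"
  shows "(\<integral>w. f (shift w) \<partial>\<tau>) = (\<integral>w. f w \<partial>\<tau>)"
  using integral_distr[OF measurable_shift assms] distr_shift by simp

lemma integral_shiftp_nat:
  fixes f :: "(int \<Rightarrow> 'e) \<Rightarrow> real"
  assumes "f \<in> borel_measurable \<tau>"
  shows "(\<integral>w. f (shiftp (int n) w) \<partial>\<tau>) = (\<integral>w. f w \<partial>\<tau>)"
proof (induction n)
  case 0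
  then show ?case
    by (simp add: shiftp_def)
next
  case (Suc n)
  have "shiftp (int (Suc n)) w = shiftp (int n) (shift w)" for w :: "int \<Rightarrow> 'e"
    by (auto simp: shiftp_def shift_def algebra_simps)
  moreover have "(\<lambda>w. f (shiftp (int n) w)) \<in> borel_measurable \<tau>"
    using measurable_compose[OF measurable_shiftp assms] .
  ultimately show ?case
    using integral_shift[of "\<lambda>w. f (shiftp (int n) w)"] Suc by simp
qed

lemma integral_telescoping:
  fixes f :: "int \<Rightarrow> (int \<Rightarrow> 'e) \<Rightarrow> real"
  assumes "\<And>i. continuous_on UNIV (f i)" "m \<le> n + 1"
  shows "(\<integral>w. (\<Sum>i\<in>{m..n}. f i w - f (i - 1) (shift w)) \<partial>\<tau>) = (\<integral>w. f n w \<partial>\<tau>) - (\<integral>w. f (m - 1) w \<partial>\<tau>)"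
proof -
  have "integrable \<tau> (\<lambda>w. f i (shift w))" for i
    using integrable_continuous continuous_on_compose2[OF assms(1) continuous_on_shift] by simp
  then have "(\<integral>w. (\<Sum>i\<in>{m..n}. f i w - f (i - 1) (shift w)) \<partial>\<tau>)
      = (\<Sum>i\<in>{m..n}. (\<integral>w. f i w \<partial>\<tau>) - (\<integral>w. f (i - 1) w \<partial>\<tau>))"
    using assms(1) by (simp add: integrable_continuous integral_shift borel_measurable_continuous)
  also have "\<dots> = (\<integral>w. f n w \<partial>\<tau>) - (\<integral>w. f (m - 1) w \<partial>\<tau>)"
    by (rule sum_telescope_int[OF assms(2)])
  finally show ?thesis .
qed

lemma integral_phi_gamma_partial:
  fixes \<phi> :: "(int \<Rightarrow> 'e) \<Rightarrow> real"
  assumes "continuous_on UNIV \<phi>"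
  shows "(\<integral>w. phi_gamma_partial \<phi> a n w \<partial>\<tau>)
    = (\<integral>w. \<phi> (shiftp (int n) (bdry a w)) \<partial>\<tau>) - (\<integral>w. \<phi> (shiftp (- int n - 1) (bdry a w)) \<partial>\<tau>)"
  unfolding phi_gamma_partial_telescoping
  using integral_telescoping[of "\<lambda>i w. \<phi> (shiftp i (bdry a w))" "- int n" "int n"]
  by (simp add: continuous_on_comp_shiftp[OF assms continuous_on_bdry])

lemma integral_phi_gamma_partial_tendsto:
  fixes \<phi> :: "(int \<Rightarrow> 'e) \<Rightarrow> real"
  assumes "extensible \<phi>"
  shows "(\<lambda>n. \<integral>w. phi_gamma_partial \<phi> a n w \<partial>\<tau>) \<longlonglongrightarrow> (\<integral>w. phi_gamma \<phi> a w \<partial>\<tau>)"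
proof (rule integral_uniform_limit[OF _ _ uniform_limit_phi_gamma_partial[OF assms]])
  have "continuous_on UNIV \<phi>"
    using assms by (simp add: extensible_def)
  then show "integrable \<tau> (phi_gamma_partial \<phi> a n)" for n
    by (intro integrable_continuous continuous_on_phi_gamma_partial)
  show "integrable \<tau> (phi_gamma \<phi> a)"
    by (intro integrable_continuous continuous_on_phi_gamma assms)
qed

lemma integral_shiftp_bdry_tendsto:
  fixes \<phi> :: "(int \<Rightarrow> 'e) \<Rightarrow> real"
  assumes "continuous_on UNIV \<phi>"
  shows "(\<lambda>n. \<integral>w. \<phi> (shiftp (int n) (bdry a w)) \<partial>\<tau>) \<longlonglongrightarrow> (\<integral>w. \<phi> w \<partial>\<tau>)"
proof -
  have "shiftp (int n) (bdry a w) \<in> cylinder (shiftp (int n) w) N" if "N \<le> n" for N n w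
    using that by (auto simp: cylinder_def shiftp_def bdry_def)
  then have unif: "uniform_limit UNIV (\<lambda>n w. \<phi> (shiftp (int n) (bdry a w)) - \<phi> (shiftp (int n) w))
      (\<lambda>_. 0) sequentially"
    by (intro uniform_limit_cylinder_diff[OF assms] eventually_sequentiallyI) blast
  have "(\<lambda>n. \<integral>w. \<phi> (shiftp (int n) (bdry a w)) - \<phi> (shiftp (int n) w) \<partial>\<tau>) \<longlonglongrightarrow> (\<integral>w. 0 \<partial>\<tau>)"
    by (rule integral_uniform_limit[OF _ _ unif])
      (auto intro!: integrable_continuous continuous_on_diff continuous_on_comp_shiftp[OF assms]
        continuous_on_bdry continuous_on_id)
  moreover have "(\<integral>w. \<phi> (shiftp (int n) (bdry a w)) - \<phi> (shiftp (int n) w) \<partial>\<tau>)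
      = (\<integral>w. \<phi> (shiftp (int n) (bdry a w)) \<partial>\<tau>) - (\<integral>w. \<phi> w \<partial>\<tau>)" for n
    using continuous_on_comp_shiftp[OF assms continuous_on_id]
    by (simp add: integrable_continuous continuous_on_comp_shiftp[OF assms] continuous_on_bdry
        integral_shiftp_nat[OF borel_measurable_continuous[OF assms]])
  ultimately show ?thesis
    by (simp add: LIM_zero_iff)
qed

lemma integral_shiftp_neg_bdry_tendsto:
  fixes \<phi> :: "(int \<Rightarrow> 'e) \<Rightarrow> real"
  assumes "continuous_on UNIV \<phi>"
  shows "(\<lambda>n. \<integral>w. \<phi> (shiftp (- int n - 1) (bdry a w)) \<partial>\<tau>) \<longlonglongrightarrow> \<phi> (\<lambda>_. a)"
proof -
  have "shiftp (- int n - 1) (bdry a w) \<in> cylinder (\<lambda>_. a) N" if "N \<le> n" for N n w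
    using that by (auto simp: cylinder_def shiftp_def bdry_def)
  then have unif: "uniform_limit UNIV (\<lambda>n w. \<phi> (shiftp (- int n - 1) (bdry a w)) - \<phi> (\<lambda>_. a))
      (\<lambda>_. 0) sequentially"
    by (intro uniform_limit_cylinder_diff[OF assms] eventually_sequentiallyI) blast
  have "(\<lambda>n. \<integral>w. \<phi> (shiftp (- int n - 1) (bdry a w)) - \<phi> (\<lambda>_. a) \<partial>\<tau>) \<longlonglongrightarrow> (\<integral>w. 0 \<partial>\<tau>)"
    by (rule integral_uniform_limit[OF _ _ unif])
      (auto intro!: integrable_continuous continuous_on_diff continuous_on_comp_shiftp[OF assms]
        continuous_on_bdry)
  then show ?thesis
    by (simp add: integrable_continuous continuous_on_comp_shiftp[OF assms] continuous_on_bdry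
        prob_space LIM_zero_iff)
qed

end

theorem lemma5p1:
  fixes \<phi> :: "(int \<Rightarrow> 'e::{finite, discrete_topology}) \<Rightarrow> real"
    and a :: 'e
  assumes "continuous_on UNIV \<phi>"
    and "extensible \<phi>"
  shows "\<exists>C::real. \<forall>\<tau>::(int \<Rightarrow> 'e) measure.
           prob_space \<tau> \<and> sets \<tau> = sets borel \<and> distr \<tau> \<tau> shift = \<tau> \<longrightarrow>
           (\<integral>w. phi_gamma \<phi> a w \<partial>\<tau>) = (\<integral>w. \<phi> w \<partial>\<tau>) + C"
proof (intro exI[of _ "- \<phi> (\<lambda>_. a)"] allI impI)
  fix \<tau> :: "(int \<Rightarrow> 'e) measure"
  assume "prob_space \<tau> \<and> sets \<tau> = sets borel \<and> distr \<tau> \<tau> shift = \<tau>"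
  then interpret shift_invariant_prob_space \<tau>
    by (simp add: shift_invariant_prob_space_def shift_invariant_prob_space_axioms_def)
  have "(\<lambda>n. \<integral>w. phi_gamma_partial \<phi> a n w \<partial>\<tau>) \<longlonglongrightarrow> (\<integral>w. \<phi> w \<partial>\<tau>) - \<phi> (\<lambda>_. a)"
    unfolding integral_phi_gamma_partial[OF assms(1)]
    by (intro tendsto_diff integral_shiftp_bdry_tendsto integral_shiftp_neg_bdry_tendsto assms(1))
  from LIMSEQ_unique[OF integral_phi_gamma_partial_tendsto[OF assms(2)] this]
  show "(\<integral>w. phi_gamma \<phi> a w \<partial>\<tau>) = (\<integral>w. \<phi> w \<partial>\<tau>) + - \<phi> (\<lambda>_. a)"
    by simp
qed

end
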